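(* Let $q$ be a prime power and $\mathcal{U}\subseteq\mathbb{P}_q(n)$ a linear code with $|\mathcal{U}|\ge 2$. Then its normalized minimum distance satisfies $\delta\le\frac12$, and $\delta=\frac12$ if and only if $\mathcal{U}$ is equidistant. In particular, the largest normalized minimum distance of a linear code in $\mathbb{P}_q(n)$ is $\frac12$.
   Context: $\mathbb{P}_q(n)$ denotes the set of all subspaces of $\mathbb{F}_q^n$. For $X,Y\in\mathbb{P}_q(n)$ the subspace distance is $d_S(X,Y)=\dim X+\dim Y-2\dim(X\cap Y)$. A linear code in $\mathbb{P}_q(n)$ is a subset $\mathcal{U}\subseteq\mathbb{P}_q(n)$ with $\{0\}\in\mathcal{U}$ for which there exists a map $\boxplus:\mathcal{U}\times\mathcal{U}\to\mathcal{U}$ such that (i) $(\mathcal{U},\boxplus)$ is an abelian group; (ii) its identity element is $\{0\}$; (iii) $X\boxplus X=\{0\}$ for all $X\in\mathcal{U}$; (iv) $d_S(Y_1\boxplus X,Y_2\boxplus X)=d_S(Y_1,Y_2)$ for all $Y_1,Y_2,X\in\mathcal{U}$. A linear code is equidistant if there is $r$ with $d_S(X,Y)=r$ for all distinct $X,Y\in\mathcal{U}$. With $d=\min\{d_S(X,Y):X,Y\in\mathcal{U},X\ne Y\}$ (the minimum distance) and $l=\max_{X\in\mathcal{U}}\dim X$, the normalized minimum distance is $\delta=d/(2l)$. *)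

theory Defs
  imports "HOL-Analysis.Analysis"
begin

text \<open>Ambient space: F_q^n rendered as 'a^'n with 'a a finite field (so |'a| = q is a prime power)
  and 'n a finite index type with CARD('n) = n.  Subspaces, dimension: the vector-space structure
  given by the scalar multiplication (*s) (interpretation vec of Cartesian_Space).\<close>

definition proj_space :: "(('a::{field,finite})^'n) set set" where
  "proj_space = {X. vec.subspace X}"

definition subspace_dist :: "(('a::{field,finite})^'n) set \<Rightarrow> ('a^'n) set \<Rightarrow> nat" where
  "subspace_dist X Y = vec.dim X + vec.dim Y - 2 * vec.dim (X \<inter> Y)"

definition linear_code :: "(('a::{field,finite})^'n) set set \<Rightarrow> bool" where
  "linear_code U \<longleftrightarrow> U \<subseteq> proj_space \<and> {0} \<in> U \<and>
     (\<exists>f :: ('a^'n) set \<Rightarrow> ('a^'n) set \<Rightarrow> ('a^'n) set.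
        (\<forall>X\<in>U. \<forall>Y\<in>U. f X Y \<in> U) \<and>
        (\<forall>X\<in>U. \<forall>Y\<in>U. \<forall>Z\<in>U. f (f X Y) Z = f X (f Y Z)) \<and>
        (\<forall>X\<in>U. \<forall>Y\<in>U. f X Y = f Y X) \<and>
        (\<forall>X\<in>U. f {0} X = X \<and> f X {0} = X) \<and>
        (\<forall>X\<in>U. \<exists>Y\<in>U. f X Y = {0}) \<and>
        (\<forall>X\<in>U. f X X = {0}) \<and>
        (\<forall>Y1\<in>U. \<forall>Y2\<in>U. \<forall>X\<in>U. subspace_dist (f Y1 X) (f Y2 X) = subspace_dist Y1 Y2))"

definition equidistant :: "(('a::{field,finite})^'n) set set \<Rightarrow> bool" where
  "equidistant U \<longleftrightarrow> (\<exists>r. \<forall>X\<in>U. \<forall>Y\<in>U. X \<noteq> Y \<longrightarrow> subspace_dist X Y = r)"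

definition min_dist :: "(('a::{field,finite})^'n) set set \<Rightarrow> nat" where
  "min_dist U = Min {subspace_dist X Y | X Y. X \<in> U \<and> Y \<in> U \<and> X \<noteq> Y}"

definition max_dim :: "(('a::{field,finite})^'n) set set \<Rightarrow> nat" where
  "max_dim U = Max (vec.dim ` U)"

definition norm_min_dist :: "(('a::{field,finite})^'n) set set \<Rightarrow> real" where
  "norm_min_dist U = real (min_dist U) / (2 * real (max_dim U))"

end

theory Submission
  imports Defs
begin

text \<open>Translation invariance together with \<open>X \<boxplus> X = {0}\<close> gives
  \<open>d(X, Y) = d(X \<boxplus> Y, Y \<boxplus> Y) = d(X \<boxplus> Y, {0}) = dim (X \<boxplus> Y)\<close>, and \<open>X \<boxplus> Y \<noteq> {0}\<close> for \<open>X \<noteq> Y\<close>.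
  Hence the distances occurring in a linear code are exactly the dimensions of its nonzero
  codewords, so \<open>d\<close> is the least and \<open>l\<close> the largest of these dimensions: \<open>d \<le> l\<close>, with
  equality iff all nonzero codewords have the same dimension, i.e. iff the code is equidistant.
  The code \<open>{{0}, \<bbbF>\<^sub>q\<^sup>n}\<close> is equidistant, so the bound \<open>1/2\<close> is attained.\<close>

lemma subspace_dist_zero_right:
  fixes X :: "('a::{field,finite}^'n) set"
  assumes "vec.subspace X"
  shows "subspace_dist X {0} = vec.dim X"
proof -
  have "X \<inter> {0} = {0}" using assms vec.subspace_0 by blast
  then show ?thesis unfolding subspace_dist_def by simp
qed

lemma vec_dim_pos:
  fixes X :: "('a::{field,finite}^'n) set"
  assumes "vec.subspace X" "X \<noteq> {0}"
  shows "vec.dim X > 0"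
proof -
  have "\<not> X \<subseteq> {0}" using assms vec.subspace_0 by blast
  then show ?thesis using vec.dim_eq_0 by auto
qed

lemma Min_eq_Max_iff_subset_singleton:
  fixes A :: "'a::linorder set"
  assumes "finite A" "A \<noteq> {}"
  shows "Min A = Max A \<longleftrightarrow> (\<exists>r. A \<subseteq> {r})"
proof
  assume "Min A = Max A"
  then have "A \<subseteq> {Min A}"
    using assms by (metis Max_ge Min_le antisym singletonI subsetI)
  then show "\<exists>r. A \<subseteq> {r}" ..
next
  assume "\<exists>r. A \<subseteq> {r}"
  then obtain r where "A = {r}" using assms by blast
  then show "Min A = Max A" by simp
qed

definition code_distances :: "(('a::{field,finite})^'n) set set \<Rightarrow> nat set" where
  "code_distances U = {subspace_dist X Y | X Y. X \<in> U \<and> Y \<in> U \<and> X \<noteq> Y}"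

lemma min_dist_eq_Min_code_distances: "min_dist U = Min (code_distances U)"
  unfolding min_dist_def code_distances_def ..

lemma equidistant_iff_code_distances: "equidistant U \<longleftrightarrow> (\<exists>r. code_distances U \<subseteq> {r})"
  unfolding equidistant_def code_distances_def by (intro ex_cong1) blast

lemma linear_code_subspace:
  assumes "linear_code U" "X \<in> U"
  shows "vec.subspace X"
proof -
  have "U \<subseteq> proj_space" using assms(1) unfolding linear_code_def by (rule conjunct1)
  then show ?thesis using assms(2) unfolding proj_space_def by blast
qed

lemma linear_code_distances_eq_dims:
  assumes "linear_code U"
  shows "code_distances U = vec.dim ` (U - {{0}})"
proof -
  obtain f where zero: "{0} \<in> U"
    and closed: "\<forall>X\<in>U. \<forall>Y\<in>U. f X Y \<in> U"
    and assoc: "\<forall>X\<in>U. \<forall>Y\<in>U. \<forall>Z\<in>U. f (f X Y) Z = f X (f Y Z)"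
    and neutral: "\<forall>X\<in>U. f {0} X = X \<and> f X {0} = X"
    and self_inverse: "\<forall>X\<in>U. f X X = {0}"
    and invariant: "\<forall>Y1\<in>U. \<forall>Y2\<in>U. \<forall>X\<in>U. subspace_dist (f Y1 X) (f Y2 X) = subspace_dist Y1 Y2"
    using assms unfolding linear_code_def by (elim conjE exE) (rule that)
  show ?thesis
  proof
    show "code_distances U \<subseteq> vec.dim ` (U - {{0}})"
    proof
      fix d assume "d \<in> code_distances U"
      then obtain X Y where XY: "X \<in> U" "Y \<in> U" "X \<noteq> Y" and d: "d = subspace_dist X Y"
        unfolding code_distances_def by blast
      have "f X Y \<noteq> {0}"
      proof
        assume "f X Y = {0}"
        then have "Y = f (f X Y) Y" using neutral XY by simp
        also have "\<dots> = X" using assoc self_inverse neutral XY by simp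
        finally show False using XY by simp
      qed
      moreover have "d = vec.dim (f X Y)"
      proof -
        have "f X Y \<in> U" using closed XY by blast
        have "d = subspace_dist (f X Y) (f Y Y)" using invariant XY d by simp
        also have "\<dots> = vec.dim (f X Y)"
          using self_inverse XY subspace_dist_zero_right[OF linear_code_subspace[OF assms \<open>f X Y \<in> U\<close>]]
          by simp
        finally show ?thesis .
      qed
      ultimately show "d \<in> vec.dim ` (U - {{0}})" using closed XY by blast
    qed
    show "vec.dim ` (U - {{0}}) \<subseteq> code_distances U"
    proof
      fix d assume "d \<in> vec.dim ` (U - {{0}})"
      then obtain Z where "Z \<in> U" "Z \<noteq> {0}" "d = subspace_dist Z {0}"
        using subspace_dist_zero_right linear_code_subspace assms by force
      then show "d \<in> code_distances U" unfolding code_distances_def using zero by blast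
    qed
  qed
qed

lemma linear_code_norm_min_dist:
  fixes U :: "(('a::{field,finite})^'n) set set"
  assumes code: "linear_code U" and card: "card U \<ge> 2"
  shows "norm_min_dist U \<le> 1/2 \<and> (norm_min_dist U = 1/2 \<longleftrightarrow> equidistant U)"
proof -
  define A where "A = vec.dim ` (U - {{0}})"
  have "finite U" using card card.infinite by fastforce
  then have fin: "finite A" unfolding A_def by simp
  have "U - {{0}} \<noteq> {}"
  proof
    assume "U - {{0}} = {}"
    then have "card U \<le> card {{0} :: ('a^'n) set}" using card_mono[of "{{0}}" U] by blast
    then show False using card by simp
  qed
  then have ne: "A \<noteq> {}" unfolding A_def by blast
  have "\<forall>a\<in>A. 0 < a"
    unfolding A_def using vec_dim_pos linear_code_subspace[OF code] by blast
  then have pos: "0 < Min A" using fin ne by simp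
  have "{0} \<in> U" using code unfolding linear_code_def by (elim conjE)
  then have "vec.dim ` U = insert (vec.dim ({0} :: ('a^'n) set)) A"
    unfolding A_def by blast
  then have max: "max_dim U = Max A"
    unfolding max_dim_def using fin ne by (simp add: max_def)
  have min: "min_dist U = Min A"
    unfolding A_def min_dist_eq_Min_code_distances linear_code_distances_eq_dims[OF code] ..
  have "Min A \<le> Max A" using fin ne by simp
  moreover have "equidistant U \<longleftrightarrow> Min A = Max A"
    unfolding equidistant_iff_code_distances linear_code_distances_eq_dims[OF code]
    using Min_eq_Max_iff_subset_singleton[OF fin ne] unfolding A_def by simp
  ultimately show ?thesis
    unfolding norm_min_dist_def min max using pos by (auto simp: field_simps)
qed

lemma equidistant_linear_code_exists:
  "\<exists>V :: (('a::{field,finite})^'n) set set. linear_code V \<and> card V \<ge> 2 \<and> equidistant V"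
proof -
  obtain i :: 'n where True by blast
  have "axis i (1::'a) \<noteq> 0" by (simp add: vec_eq_iff axis_def)
  then have UNIV_ne: "(UNIV :: ('a^'n) set) \<noteq> {0}" by blast
  define V :: "('a^'n) set set" where "V = {{0}, UNIV}"
  define f :: "('a^'n) set \<Rightarrow> ('a^'n) set \<Rightarrow> ('a^'n) set" where
    "f = (\<lambda>X Y. if X = {0} then Y else if Y = {0} then X else {0})"
  have "linear_code V" unfolding linear_code_def
  proof (intro conjI exI[of _ f])
    show "V \<subseteq> proj_space" unfolding V_def proj_space_def
      using vec.subspace_UNIV vec.subspace_single_0 by auto
    show "\<forall>Y1\<in>V. \<forall>Y2\<in>V. \<forall>X\<in>V. subspace_dist (f Y1 X) (f Y2 X) = subspace_dist Y1 Y2"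
      unfolding V_def f_def using UNIV_ne by (auto simp: subspace_dist_def)
  qed (auto simp: V_def f_def UNIV_ne)
  moreover have "card V = 2" unfolding V_def using UNIV_ne by simp
  moreover have "equidistant V" unfolding equidistant_def V_def
    by (rule exI[of _ "subspace_dist {0} UNIV"]) (auto simp: subspace_dist_def Int_commute)
  ultimately show ?thesis by auto
qed

theorem corollary1:
  fixes U :: "(('a::{field,finite})^'n) set set"
  assumes "linear_code U" and "card U \<ge> 2"
  shows "norm_min_dist U \<le> 1/2 \<and> (norm_min_dist U = 1/2 \<longleftrightarrow> equidistant U) \<and>
         Max {norm_min_dist V | V :: (('a::{field,finite})^'n) set set. linear_code V \<and> card V \<ge> 2} = 1/2"
proof -
  let ?S = "{norm_min_dist V | V :: (('a::{field,finite})^'n) set set. linear_code V \<and> card V \<ge> 2}"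
  have "finite ?S"
    using finite_image_set[of "\<lambda>V. linear_code V \<and> card V \<ge> 2" norm_min_dist] by simp
  moreover obtain V :: "(('a::{field,finite})^'n) set set"
    where "linear_code V" "card V \<ge> 2" "equidistant V"
    using equidistant_linear_code_exists by blast
  then have "1/2 \<in> ?S" using linear_code_norm_min_dist by fastforce
  moreover have "\<forall>x\<in>?S. x \<le> 1/2" using linear_code_norm_min_dist by blast
  ultimately have "Max ?S = 1/2" by (meson Max_eqI)
  then show ?thesis using linear_code_norm_min_dist[OF assms] by simp
qed

end
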